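(* Let $A$ be a finite set. The family $\mathscr U_A=\{U(\overset{*}{<})\}_{\overset{*}{<}\in R^+(A)}$ is a proper $\Sigma_A$-equivariant, good and complete open cover of the ordered configuration space $\mathrm{OConf}(A,\mathbb R^2)=\{f:A\to\mathbb R^2\mid f\text{ injective}\}$.
   Context: A strict partial order is a transitive irreflexive relation; it is semi-linear if it is induced by a surjection $h:A\to\{1,\dots,l\}$ (i.e. $a<b$ iff $h(a)<h(b)$). $<_1\bar\cup<_2$ denotes the transitive closure of the union. A double order on $A$ is a pair $\overset{*}{<}=(\overset{x}{<},\overset{y}{<})$ of strict partial orders such that any two distinct elements are comparable by $\overset{x}{<}$ or by $\overset{y}{<}$; regular if $\overset{x}{<}$ is semi-linear and $a\overset{x}{<}b$ implies $a,b$ are not $\overset{y}{<}$-comparable; semi-regular if it is the componentwise $\bar\cup$ of finitely many regular double orders. $R^+(A)$ is the set of semi-regular double orders. For a double order, $U(\overset{*}{<})=\{(f_x,f_y):A\to\mathbb R^2\mid a\overset{x}{<}b\Rightarrow f_x(a)<f_x(b),\ a\overset{y}{<}b\Rightarrow f_y(a)<f_y(b)\}$. $\Sigma_A$ acts on $\mathrm{OConf}(A,\mathbb R^2)$ by precomposition and on double orders by $(\overset{x}{<},\overset{y}{<})\sigma=(\overset{x}{<}\sigma,\overset{y}{<}\sigma)$, $a(\overset{x}{<}\sigma)b$ iff $\sigma(a)\overset{x}{<}\sigma(b)$ (similarly for $y$). A cover $\{U_i\}_{i\in I}$ is $G$-equivariant if $G$ acts on $I$ with $U_ig=U_{ig}$;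 proper if additionally $U_i\cap U_{ig}=\emptyset$ for $g\ne1$; good if all non-empty intersections are contractible; complete if closed under non-empty intersections. *)

theory Defs
  imports "HOL-Analysis.Analysis" "HOL-Combinatorics.Permutations"
begin

definition strict_po :: "'a set \<Rightarrow> 'a rel \<Rightarrow> bool" where
  "strict_po A r \<longleftrightarrow> r \<subseteq> A \<times> A \<and> trans r \<and> (\<forall>a. (a, a) \<notin> r)"

definition semi_linear :: "'a set \<Rightarrow> 'a rel \<Rightarrow> bool" where
  "semi_linear A r \<longleftrightarrow> r \<subseteq> A \<times> A \<and>
     (\<exists>(h :: 'a \<Rightarrow> nat) l. h ` A = {1..l} \<and> (\<forall>a\<in>A. \<forall>b\<in>A. (a, b) \<in> r \<longleftrightarrow> h a < h b))"

text \<open>Double orders: pairs (x-order, y-order).\<close>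
definition double_order :: "'a set \<Rightarrow> 'a rel \<times> 'a rel \<Rightarrow> bool" where
  "double_order A d \<longleftrightarrow> strict_po A (fst d) \<and> strict_po A (snd d) \<and>
     (\<forall>a\<in>A. \<forall>b\<in>A. a \<noteq> b \<longrightarrow>
        (a, b) \<in> fst d \<or> (b, a) \<in> fst d \<or> (a, b) \<in> snd d \<or> (b, a) \<in> snd d)"

definition regular_double_order :: "'a set \<Rightarrow> 'a rel \<times> 'a rel \<Rightarrow> bool" where
  "regular_double_order A d \<longleftrightarrow> double_order A d \<and> semi_linear A (fst d) \<and>
     (\<forall>a b. (a, b) \<in> fst d \<longrightarrow> (a, b) \<notin> snd d \<and> (b, a) \<notin> snd d)"

definition semi_regular :: "'a set \<Rightarrow> 'a rel \<times> 'a rel \<Rightarrow> bool" where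
  "semi_regular A d \<longleftrightarrow> double_order A d \<and>
     (\<exists>S. finite S \<and> S \<noteq> {} \<and> (\<forall>e\<in>S. regular_double_order A e) \<and>
          d = (trancl (\<Union>(fst ` S)), trancl (\<Union>(snd ` S))))"

definition Rplus :: "'a set \<Rightarrow> ('a rel \<times> 'a rel) set" where
  "Rplus A = {d. semi_regular A d}"

definition OConf :: "'a set \<Rightarrow> ('a \<Rightarrow> real \<times> real) set" where
  "OConf A = {f \<in> PiE A (\<lambda>_. UNIV). inj_on f A}"

definition Uset :: "'a set \<Rightarrow> 'a rel \<times> 'a rel \<Rightarrow> ('a \<Rightarrow> real \<times> real) set" where
  "Uset A d = {f \<in> PiE A (\<lambda>_. UNIV).
      (\<forall>a b. (a, b) \<in> fst d \<longrightarrow> fst (f a) < fst (f b)) \<and>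
      (\<forall>a b. (a, b) \<in> snd d \<longrightarrow> snd (f a) < snd (f b))}"

definition confspace :: "'a set \<Rightarrow> ('a \<Rightarrow> real \<times> real) topology" where
  "confspace A = product_topology (\<lambda>_. euclidean) A"

definition dact :: "'a rel \<times> 'a rel \<Rightarrow> ('a \<Rightarrow> 'a) \<Rightarrow> 'a rel \<times> 'a rel" where
  "dact d \<sigma> = ({(a, b). (\<sigma> a, \<sigma> b) \<in> fst d}, {(a, b). (\<sigma> a, \<sigma> b) \<in> snd d})"

definition cact :: "('a \<Rightarrow> real \<times> real) \<Rightarrow> ('a \<Rightarrow> 'a) \<Rightarrow> ('a \<Rightarrow> real \<times> real)" where
  "cact f \<sigma> = f \<circ> \<sigma>"

end

theory Submission
  imports Defs
begin

(* Each U(d) is cut out of (R^2)^A by finitely many strict coordinate inequalities, so it is open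
   and convex, hence contractible. An injective configuration f lies in U of its lexicographic double
   order (first by x, then by y among equal x), which is regular; conversely a double order forces
   injectivity. An intersection of U(d), d in J, is U of the componentwise transitive closure of the
   union of J, and this is again semi-regular, generated by the union of the generating sets.
   Permutations act on double orders by pulling back, compatibly with all of this.
   Properness reduces to a regular e: if f and f o sigma both lie in U(e), a counting argument shows
   that sigma preserves the levels of the semi-linear x-order and then, inside a level, where the
   y-order is total, fixes every point. *)

definition induced_less :: "('a \<Rightarrow> 'b::order) \<Rightarrow> 'a rel" where
  "induced_less \<phi> = {(a, b). \<phi> a < \<phi> b}"

lemma in_induced_less [simp]: "(a, b) \<in> induced_less \<phi> \<longleftrightarrow> \<phi> a < \<phi> b"
  by (simp add: induced_less_def)

lemma trans_induced_less: "trans (induced_less \<phi>)"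
  by (auto intro: transI order_less_trans)

lemma trancl_subset_trans_iff: "trans S \<Longrightarrow> R\<^sup>+ \<subseteq> S \<longleftrightarrow> R \<subseteq> S"
  by (metis order_trans trancl_id trancl_incr trancl_mono_subset)

lemma trancl_UN_trancl: "(\<Union>i\<in>I. (F i)\<^sup>+)\<^sup>+ = (\<Union>i\<in>I. F i)\<^sup>+"
proof
  show "(\<Union>i\<in>I. F i)\<^sup>+ \<subseteq> (\<Union>i\<in>I. (F i)\<^sup>+)\<^sup>+"
    by (intro trancl_mono_subset) auto
  show "(\<Union>i\<in>I. (F i)\<^sup>+)\<^sup>+ \<subseteq> (\<Union>i\<in>I. F i)\<^sup>+"
    by (subst trancl_subset_trans_iff) (auto intro: trancl_mono)
qed

lemma trancl_inv_image_bij: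
  assumes "bij \<sigma>"
  shows "(inv_image R \<sigma>)\<^sup>+ = inv_image (R\<^sup>+) \<sigma>"
proof
  show "(inv_image R \<sigma>)\<^sup>+ \<subseteq> inv_image (R\<^sup>+) \<sigma>"
    by (simp add: trancl_subset_trans_iff trans_inv_image) (auto simp: inv_image_def)
  have inv_pair: "(inv \<sigma> x, inv \<sigma> y) \<in> (inv_image R \<sigma>)\<^sup>+" if "(x, y) \<in> R\<^sup>+" for x y
    using that
  proof (induction rule: trancl_induct)
    case (base y)
    then show ?case by (intro r_into_trancl) (simp add: surj_f_inv_f[OF bij_is_surj[OF assms]])
  next
    case (step y z)
    then show ?case by (metis assms bij_inv_eq_iff in_inv_image trancl.trancl_into_trancl)
  qed
  show "inv_image (R\<^sup>+) \<sigma> \<subseteq> (inv_image R \<sigma>)\<^sup>+"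
  proof clarify
    fix a b assume "(a, b) \<in> inv_image (R\<^sup>+) \<sigma>"
    then show "(a, b) \<in> (inv_image R \<sigma>)\<^sup>+"
      using inv_pair[of "\<sigma> a" "\<sigma> b"] by (simp add: inv_f_f[OF bij_is_inj[OF assms]])
  qed
qed

lemma Uset_iff:
  "f \<in> Uset A d \<longleftrightarrow>
     f \<in> A \<rightarrow>\<^sub>E UNIV \<and> fst d \<subseteq> induced_less (fst \<circ> f) \<and> snd d \<subseteq> induced_less (snd \<circ> f)"
  by (auto simp: Uset_def)

definition double_join :: "('a rel \<times> 'a rel) set \<Rightarrow> 'a rel \<times> 'a rel" where
  "double_join S = ((\<Union>(fst ` S))\<^sup>+, (\<Union>(snd ` S))\<^sup>+)"

lemma semi_regular_iff:
  "semi_regular A d \<longleftrightarrow> double_order A d \<and>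
     (\<exists>S. finite S \<and> S \<noteq> {} \<and> (\<forall>e\<in>S. regular_double_order A e) \<and> d = double_join S)"
  by (simp add: semi_regular_def double_join_def)

lemma Uset_double_join:
  assumes "S \<noteq> {}"
  shows "Uset A (double_join S) = (\<Inter>d\<in>S. Uset A d)"
proof -
  have "f \<in> Uset A (double_join S) \<longleftrightarrow> (\<forall>d\<in>S. f \<in> Uset A d)" for f
    using assms
    by (simp add: Uset_iff double_join_def trancl_subset_trans_iff trans_induced_less UN_subset_iff) blast
  then show ?thesis by blast
qed

lemma double_join_image_double_join: "double_join (double_join ` \<S>) = double_join (\<Union>\<S>)"
proof -
  have "(\<Union>S\<in>\<S>. (\<Union>(p ` S))\<^sup>+)\<^sup>+ = (\<Union>(p ` \<Union>\<S>))\<^sup>+" for p :: "'a rel \<times> 'a rel \<Rightarrow> 'a rel"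
    by (simp add: trancl_UN_trancl)
  then show ?thesis by (simp add: double_join_def image_image)
qed

lemma Uset_subset_OConf:
  assumes "double_order A d"
  shows "Uset A d \<subseteq> OConf A"
proof
  fix f assume f: "f \<in> Uset A d"
  have "f a \<noteq> f b" if "a \<in> A" "b \<in> A" "a \<noteq> b" for a b
  proof -
    have "(a, b) \<in> fst d \<or> (b, a) \<in> fst d \<or> (a, b) \<in> snd d \<or> (b, a) \<in> snd d"
      using assms that by (simp add: double_order_def)
    then show ?thesis
      using f unfolding Uset_iff by (auto dest: subsetD)
  qed
  then show "f \<in> OConf A"
    using f by (auto simp: OConf_def Uset_def inj_on_def)
qed

lemma double_order_double_join:
  assumes "d0 \<in> S" and "\<And>d. d \<in> S \<Longrightarrow> double_order A d" and "Uset A (double_join S) \<noteq> {}"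
  shows "double_order A (double_join S)"
proof -
  obtain f where f: "f \<in> Uset A (double_join S)"
    using assms(3) by blast
  have "\<Union>(fst ` S) \<subseteq> A \<times> A" "\<Union>(snd ` S) \<subseteq> A \<times> A"
    using assms(2) by (fastforce simp: double_order_def strict_po_def)+
  moreover have "(a, a) \<notin> fst (double_join S)" "(a, a) \<notin> snd (double_join S)" for a
    using f by (auto simp: Uset_def)
  ultimately have "strict_po A (fst (double_join S))" "strict_po A (snd (double_join S))"
    by (simp_all add: strict_po_def double_join_def trancl_subset_Sigma)
  moreover have "fst d0 \<subseteq> fst (double_join S)" "snd d0 \<subseteq> snd (double_join S)"
    using assms(1) by (auto simp: double_join_def)
  ultimately show ?thesis
    using assms(2)[OF assms(1)] unfolding double_order_def by blast
qed

lemma semi_regular_if_regular: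
  assumes "regular_double_order A e"
  shows "semi_regular A e"
proof -
  have "double_order A e"
    using assms by (simp add: regular_double_order_def)
  then have "double_join {e} = e"
    by (simp add: double_join_def double_order_def strict_po_def)
  then show ?thesis
    using assms \<open>double_order A e\<close> unfolding semi_regular_iff
    by (metis finite.emptyI finite_insert insert_not_empty singletonD)
qed

lemma semi_regular_double_join:
  assumes "finite J" "J \<noteq> {}" "\<And>d. d \<in> J \<Longrightarrow> semi_regular A d" "Uset A (double_join J) \<noteq> {}"
  shows "semi_regular A (double_join J)"
proof -
  obtain gen where gen: "\<And>d. d \<in> J \<Longrightarrow> finite (gen d) \<and> gen d \<noteq> {} \<and>
      (\<forall>e\<in>gen d. regular_double_order A e) \<and> d = double_join (gen d)"
    using assms(3) unfolding semi_regular_iff by metis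
  have "J = double_join ` gen ` J"
    using gen by (force simp: image_image)
  then have "double_join J = double_join (\<Union>(gen ` J))"
    by (metis double_join_image_double_join)
  moreover have "double_order A (double_join J)"
    using assms(2-4) double_order_double_join semi_regular_def by blast
  moreover have "finite (\<Union>(gen ` J))" "\<Union>(gen ` J) \<noteq> {}"
    "\<forall>e\<in>\<Union>(gen ` J). regular_double_order A e"
    using gen assms(1,2) by auto
  ultimately show ?thesis
    unfolding semi_regular_iff by (intro conjI exI[of _ "\<Union>(gen ` J)"]) simp_all
qed

lemma dact_eq_inv_image: "dact d \<sigma> = (inv_image (fst d) \<sigma>, inv_image (snd d) \<sigma>)"
  by (simp add: dact_def inv_image_def)

lemma strict_po_inv_image:
  assumes "strict_po A r" "\<sigma> permutes A"
  shows "strict_po A (inv_image r \<sigma>)"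
  using assms by (auto simp: strict_po_def trans_inv_image permutes_in_image)

lemma double_order_dact:
  assumes "double_order A d" "\<sigma> permutes A"
  shows "double_order A (dact d \<sigma>)"
proof -
  have "\<sigma> a \<noteq> \<sigma> b" if "a \<noteq> b" for a b
    using that permutes_inj[OF assms(2)] by (auto dest: injD)
  then show ?thesis
    using assms by (simp add: double_order_def dact_eq_inv_image strict_po_inv_image permutes_in_image)
qed

lemma semi_linear_inv_image:
  assumes "semi_linear A r" "strict_po A r" "\<sigma> permutes A"
  shows "semi_linear A (inv_image r \<sigma>)"
proof -
  obtain h :: "'a \<Rightarrow> nat" and l where h: "h ` A = {1..l}" "\<forall>a\<in>A. \<forall>b\<in>A. (a, b) \<in> r \<longleftrightarrow> h a < h b"
    using assms(1) unfolding semi_linear_def by blast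
  have "(h \<circ> \<sigma>) ` A = {1..l}"
    by (metis h(1) image_comp permutes_image[OF assms(3)])
  moreover have "\<forall>a\<in>A. \<forall>b\<in>A. (a, b) \<in> inv_image r \<sigma> \<longleftrightarrow> (h \<circ> \<sigma>) a < (h \<circ> \<sigma>) b"
    using h(2) by (simp add: permutes_in_image[OF assms(3)])
  moreover have "inv_image r \<sigma> \<subseteq> A \<times> A"
    using strict_po_inv_image[OF assms(2,3)] by (simp add: strict_po_def)
  ultimately show ?thesis
    unfolding semi_linear_def by blast
qed

lemma regular_double_order_dact:
  assumes "regular_double_order A d" "\<sigma> permutes A"
  shows "regular_double_order A (dact d \<sigma>)"
proof -
  have d: "double_order A d" and sl: "semi_linear A (fst d)"
    using assms(1) by (simp_all add: regular_double_order_def)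
  have "double_order A (dact d \<sigma>)"
    using double_order_dact[OF d assms(2)] .
  moreover have "semi_linear A (fst (dact d \<sigma>))"
    using semi_linear_inv_image[OF sl _ assms(2)] d by (simp add: double_order_def dact_eq_inv_image)
  ultimately show ?thesis
    using assms(1) by (simp add: regular_double_order_def dact_eq_inv_image)
qed

lemma dact_double_join:
  assumes "bij \<sigma>"
  shows "dact (double_join S) \<sigma> = double_join ((\<lambda>d. dact d \<sigma>) ` S)"
proof -
  have "inv_image (\<Union>(p ` S)) \<sigma> = \<Union>((\<lambda>d. inv_image (p d) \<sigma>) ` S)" for p :: "'a rel \<times> 'a rel \<Rightarrow> 'a rel"
    by (auto simp: inv_image_def)
  then show ?thesis
    by (simp add: double_join_def dact_eq_inv_image trancl_inv_image_bij[OF assms, symmetric] image_image)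
qed

lemma semi_regular_dact:
  assumes "semi_regular A d" "\<sigma> permutes A"
  shows "semi_regular A (dact d \<sigma>)"
proof -
  obtain S where S: "finite S" "S \<noteq> {}" "\<forall>e\<in>S. regular_double_order A e" "d = double_join S"
    and d: "double_order A d"
    using assms(1) unfolding semi_regular_iff by blast
  show ?thesis
    unfolding semi_regular_iff
  proof (intro conjI exI[of _ "(\<lambda>e. dact e \<sigma>) ` S"])
    show "dact d \<sigma> = double_join ((\<lambda>e. dact e \<sigma>) ` S)"
      using S(4) dact_double_join[OF permutes_bij[OF assms(2)]] by simp
    show "double_order A (dact d \<sigma>)"
      using double_order_dact[OF d assms(2)] .
    show "\<forall>e\<in>(\<lambda>e. dact e \<sigma>) ` S. regular_double_order A e"
      using S(3) regular_double_order_dact[OF _ assms(2)] by blast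
  qed (use S in auto)
qed

lemma Uset_dact:
  assumes "\<sigma> permutes A"
  shows "(\<lambda>f. cact f \<sigma>) ` Uset A d = Uset A (dact d \<sigma>)"
proof -
  have comp_PiE: "f \<circ> \<pi> \<in> A \<rightarrow>\<^sub>E UNIV" if "f \<in> A \<rightarrow>\<^sub>E UNIV" "\<pi> permutes A" for f and \<pi>
    using that by (auto simp: PiE_def extensional_def permutes_not_in)
  have "f \<circ> \<sigma> \<in> Uset A (dact d \<sigma>)" if "f \<in> Uset A d" for f
    using that comp_PiE[OF _ assms] by (auto simp: Uset_def dact_def)
  moreover have "g \<circ> inv \<sigma> \<in> Uset A d" if g: "g \<in> Uset A (dact d \<sigma>)" for g
  proof -
    have "\<sigma> (inv \<sigma> a) = a" for a
      by (rule permutes_inverses(1)[OF assms])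
    then show ?thesis
      using g comp_PiE[OF _ permutes_inv[OF assms]] unfolding Uset_def dact_def
      by (smt (verit, best) case_prod_conv comp_apply fst_conv mem_Collect_eq snd_conv)
  qed
  moreover have "g = cact (g \<circ> inv \<sigma>) \<sigma>" for g
    by (simp add: cact_def o_assoc[symmetric] permutes_inv_o(2)[OF assms])
  ultimately show ?thesis
    by (auto simp: cact_def intro: image_eqI)
qed

lemma bij_betw_not_below_if_monotone:
  fixes \<phi> :: "'a \<Rightarrow> 'b::linorder"
  assumes fin: "finite B" and bij: "bij_betw \<tau> B B"
    and neg_trans: "\<And>a b c. a \<in> B \<Longrightarrow> b \<in> B \<Longrightarrow> c \<in> B \<Longrightarrow> (a, c) \<in> R \<Longrightarrow> (a, b) \<in> R \<or> (b, c) \<in> R"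
    and mono: "R \<inter> B \<times> B \<subseteq> induced_less \<phi>" and mono_comp: "R \<inter> B \<times> B \<subseteq> induced_less (\<phi> \<circ> \<tau>)"
    and c: "c \<in> B"
  shows "(\<tau> c, c) \<notin> R"
proof
  assume below: "(\<tau> c, c) \<in> R"
  have \<tau>c: "\<tau> c \<in> B"
    using bij c by (rule bij_betw_apply)
  define X where "X = {b \<in> B. (b, c) \<in> R}"
  define Y where "Y = {b \<in> B. b \<noteq> \<tau> c \<and> (\<tau> c, b) \<notin> R}"
  \<comment> \<open>\<open>\<tau>\<close> maps \<open>X\<close> injectively into \<open>Y\<close>, while negative transitivity puts \<open>\<tau> c\<close> and all of \<open>Y\<close> into \<open>X\<close>.\<close>
  have "\<tau> ` X \<subseteq> Y"
  proof
    fix y assume "y \<in> \<tau> ` X"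
    then obtain b where b: "b \<in> B" "(b, c) \<in> R" "y = \<tau> b"
      by (auto simp: X_def)
    have "y \<in> B"
      using bij b(1) b(3) by (simp add: bij_betw_apply)
    moreover have "\<phi> y < \<phi> (\<tau> c)"
      using mono_comp b c by auto
    ultimately show "y \<in> Y"
      using mono \<tau>c by (fastforce simp: Y_def)
  qed
  have "inj_on \<tau> X"
    using bij_betw_imp_inj_on[OF bij] by (rule inj_on_subset) (auto simp: X_def)
  have finite: "finite X" "finite Y"
    using fin unfolding X_def Y_def by (simp_all add: finite_subset)
  have "card X \<le> card Y"
    using card_image[OF \<open>inj_on \<tau> X\<close>] card_mono[OF finite(2) \<open>\<tau> ` X \<subseteq> Y\<close>] by simp
  moreover have "insert (\<tau> c) Y \<subseteq> X"
  proof
    fix b assume "b \<in> insert (\<tau> c) Y"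
    then show "b \<in> X"
    proof
      assume "b \<in> Y"
      then have "b \<in> B" "(\<tau> c, b) \<notin> R"
        by (simp_all add: Y_def)
      then show ?thesis
        using neg_trans[OF \<tau>c \<open>b \<in> B\<close> c below] by (simp add: X_def)
    qed (simp add: X_def below \<tau>c)
  qed
  then have "card (insert (\<tau> c) Y) \<le> card X"
    using finite(1) by (rule card_mono[rotated])
  moreover have "card (insert (\<tau> c) Y) = Suc (card Y)"
    using finite(2) by (simp add: Y_def)
  ultimately show False
    by simp
qed

lemma bij_betw_incomparable_if_monotone:
  fixes \<phi> :: "'a \<Rightarrow> 'b::linorder"
  assumes fin: "finite B" and bij: "bij_betw \<tau> B B"
    and neg_trans: "\<And>a b c. a \<in> B \<Longrightarrow> b \<in> B \<Longrightarrow> c \<in> B \<Longrightarrow> (a, c) \<in> R \<Longrightarrow> (a, b) \<in> R \<or> (b, c) \<in> R"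
    and mono: "R \<inter> B \<times> B \<subseteq> induced_less \<phi>" and mono_comp: "R \<inter> B \<times> B \<subseteq> induced_less (\<phi> \<circ> \<tau>)"
    and c: "c \<in> B"
  shows "(\<tau> c, c) \<notin> R \<and> (c, \<tau> c) \<notin> R"
proof
  show "(\<tau> c, c) \<notin> R"
    using assms by (rule bij_betw_not_below_if_monotone)
  define \<tau>' where "\<tau>' = inv_into B \<tau>"
  have bij': "bij_betw \<tau>' B B"
    unfolding \<tau>'_def using bij by (rule bij_betw_inv_into)
  have "(\<phi> \<circ> \<tau> \<circ> \<tau>') b = \<phi> b" if "b \<in> B" for b
    using bij_betw_inv_into_right[OF bij that] by (simp add: \<tau>'_def)
  then have mono': "R \<inter> B \<times> B \<subseteq> induced_less (\<phi> \<circ> \<tau> \<circ> \<tau>')"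
    using mono by auto
  have "(\<tau>' (\<tau> c), \<tau> c) \<notin> R"
    using bij_betw_not_below_if_monotone[OF fin bij' neg_trans mono_comp mono'] bij c
    by (simp add: bij_betw_apply)
  then show "(c, \<tau> c) \<notin> R"
    using bij_betw_inv_into_left[OF bij c] by (simp add: \<tau>'_def)
qed

lemma permutes_preserves_levels_if_monotone:
  fixes \<phi> :: "'a \<Rightarrow> 'b::linorder" and h :: "'a \<Rightarrow> 'c::linorder"
  assumes fin: "finite A" and \<tau>: "\<tau> permutes A"
    and h: "\<And>a b. a \<in> A \<Longrightarrow> b \<in> A \<Longrightarrow> (a, b) \<in> R \<longleftrightarrow> h a < h b"
    and mono: "R \<subseteq> induced_less \<phi>" and mono_comp: "R \<subseteq> induced_less (\<phi> \<circ> \<tau>)"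
    and a: "a \<in> A"
  shows "h (\<tau> a) = h a"
proof -
  have neg_trans: "(x, b) \<in> R \<or> (b, c) \<in> R"
    if "x \<in> A" "b \<in> A" "c \<in> A" "(x, c) \<in> R" for x b c
    using that by (simp add: h) (meson le_less_trans not_less)
  have "(\<tau> a, a) \<notin> R \<and> (a, \<tau> a) \<notin> R"
    by (rule bij_betw_incomparable_if_monotone[OF fin permutes_imp_bij[OF \<tau>] neg_trans
          subset_trans[OF Int_lower1 mono] subset_trans[OF Int_lower1 mono_comp] a])
  then have "\<not> h (\<tau> a) < h a" "\<not> h a < h (\<tau> a)"
    using h a permutes_in_image[OF \<tau>] by simp_all
  then show ?thesis
    by (simp add: not_less order.antisym)
qed

lemma regular_double_order_Uset_comp_eq_id:
  assumes fin: "finite A" and reg: "regular_double_order A e" and \<tau>: "\<tau> permutes A"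
    and f: "f \<in> Uset A e" and f\<tau>: "f \<circ> \<tau> \<in> Uset A e"
  shows "\<tau> = id"
proof -
  obtain h :: "'a \<Rightarrow> nat" and l where "\<forall>a\<in>A. \<forall>b\<in>A. (a, b) \<in> fst e \<longleftrightarrow> h a < h b"
    using reg unfolding regular_double_order_def semi_linear_def by blast
  then have h: "\<And>a b. a \<in> A \<Longrightarrow> b \<in> A \<Longrightarrow> (a, b) \<in> fst e \<longleftrightarrow> h a < h b"
    by blast
  have d: "double_order A e"
    using reg by (simp add: regular_double_order_def)
  have comparable: "(a, b) \<in> fst e \<or> (b, a) \<in> fst e \<or> (a, b) \<in> snd e \<or> (b, a) \<in> snd e"
    if "a \<in> A" "b \<in> A" "a \<noteq> b" for a b
    using d that by (simp add: double_order_def)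
  have mono: "fst e \<subseteq> induced_less (fst \<circ> f)" "snd e \<subseteq> induced_less (snd \<circ> f)"
    "fst e \<subseteq> induced_less (fst \<circ> f \<circ> \<tau>)" "snd e \<subseteq> induced_less (snd \<circ> f \<circ> \<tau>)"
    using f f\<tau> by (simp_all add: Uset_iff o_assoc)
  have \<tau>A: "\<tau> a \<in> A \<longleftrightarrow> a \<in> A" for a
    using \<tau> by (rule permutes_in_image)
  have same_level: "h (\<tau> a) = h a" if "a \<in> A" for a
    using permutes_preserves_levels_if_monotone[OF fin \<tau> h mono(1,3) that] .
  \<comment> \<open>On a level of \<open>h\<close> the y-order is total, so the argument applies once more.\<close>
  have "\<tau> a = a" if a: "a \<in> A" for a
  proof -
    define B where "B = {b \<in> A. h b = h a}"
    have "B \<subseteq> A"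
      by (auto simp: B_def)
    then have B: "finite B" "a \<in> B"
      using finite_subset[OF _ fin] a by (auto simp: B_def)
    have "\<tau> ` B \<subseteq> B"
      using same_level \<tau>A by (auto simp: B_def)
    moreover have "inj_on \<tau> B"
      using permutes_inj_on[OF \<tau>] .
    ultimately have bij: "bij_betw \<tau> B B"
      unfolding bij_betw_def using endo_inj_surj[OF B(1)] by blast
    have neg_trans: "(x, b) \<in> snd e \<or> (b, c) \<in> snd e"
      if "x \<in> B" "b \<in> B" "c \<in> B" "(x, c) \<in> snd e" for x b c
    proof (cases "b = x")
      case False
      then have "(x, b) \<in> snd e \<or> (b, x) \<in> snd e"
        using comparable[of x b] h that by (auto simp: B_def)
      then show ?thesis
        using d that(4) unfolding double_order_def strict_po_def by (meson transD)
    qed (use that in simp)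
    have "(\<tau> a, a) \<notin> snd e \<and> (a, \<tau> a) \<notin> snd e"
      using bij_betw_incomparable_if_monotone[OF _ bij neg_trans
          subset_trans[OF Int_lower1 mono(2)] subset_trans[OF Int_lower1 mono(4)]] B
      by blast
    moreover have "(\<tau> a, a) \<notin> fst e \<and> (a, \<tau> a) \<notin> fst e"
      using h a \<tau>A same_level by simp
    ultimately show ?thesis
      using comparable[of "\<tau> a" a] a \<tau>A by blast
  qed
  then show ?thesis
    using \<tau> by (metis eq_id_iff permutes_not_in)
qed

lemma Uset_Int_Uset_dact:
  assumes "finite A" "semi_regular A d" "\<sigma> permutes A" "\<sigma> \<noteq> id"
  shows "Uset A d \<inter> Uset A (dact d \<sigma>) = {}"
proof (rule ccontr)
  assume "Uset A d \<inter> Uset A (dact d \<sigma>) \<noteq> {}"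
  then obtain f where f: "f \<in> Uset A d" "f \<in> (\<lambda>f. cact f \<sigma>) ` Uset A d"
    unfolding Uset_dact[OF assms(3)] by blast
  then obtain g where g: "g \<in> Uset A d" "g \<circ> \<sigma> \<in> Uset A d"
    by (auto simp: cact_def)
  obtain S where S: "S \<noteq> {}" "\<forall>e\<in>S. regular_double_order A e" "d = double_join S"
    using assms(2) unfolding semi_regular_iff by blast
  then obtain e where e: "e \<in> S" "regular_double_order A e"
    by blast
  have "Uset A d \<subseteq> Uset A e"
    using S e by (auto simp: Uset_double_join)
  then have "\<sigma> = id"
    using regular_double_order_Uset_comp_eq_id[OF assms(1) e(2) assms(3)] g by blast
  with assms(4) show False ..
qed

lemma rank_in_finite_set:
  fixes V :: "'b::linorder set"
  assumes fin: "finite V"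
  defines "position \<equiv> \<lambda>v. card {w \<in> V. w \<le> v}"
  shows "position ` V = {1..card V}" and "\<And>v w. v \<in> V \<Longrightarrow> w \<in> V \<Longrightarrow> position v < position w \<longleftrightarrow> v < w"
proof -
  have fin_le: "finite {w \<in> V. w \<le> v}" for v
    using fin by simp
  show less_iff: "position v < position w \<longleftrightarrow> v < w" if "v \<in> V" "w \<in> V" for v w
  proof
    assume "v < w"
    then have "{u \<in> V. u \<le> v} \<subseteq> {u \<in> V. u \<le> w}" "w \<notin> {u \<in> V. u \<le> v}"
      by auto
    then have "{u \<in> V. u \<le> v} \<subset> {u \<in> V. u \<le> w}"
      using \<open>w \<in> V\<close> by blast
    then show "position v < position w"
      unfolding position_def by (rule psubset_card_mono[OF fin_le])
  next
    assume "position v < position w"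
    moreover have "position w \<le> position v" if "w \<le> v"
      unfolding position_def using that by (intro card_mono[OF fin_le]) auto
    ultimately show "v < w"
      by (meson not_le)
  qed
  have "position ` V \<subseteq> {1..card V}"
  proof
    fix r assume "r \<in> position ` V"
    then obtain v where v: "v \<in> V" "r = position v"
      by blast
    have "0 < position v"
      unfolding position_def using v(1) fin_le by (auto simp: card_gt_0_iff)
    moreover have "position v \<le> card V"
      unfolding position_def using fin by (intro card_mono) auto
    ultimately show "r \<in> {1..card V}"
      using v(2) by simp
  qed
  moreover have "inj_on position V"
    using less_iff by (metis inj_onI linorder_neqE less_irrefl)
  then have "card (position ` V) = card {1..card V}"
    by (simp add: card_image)
  ultimately show "position ` V = {1..card V}"
    by (intro card_subset_eq) auto
qed

lemma semi_linear_induced_less: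
  fixes \<phi> :: "'a \<Rightarrow> 'b::linorder"
  assumes "finite A"
  shows "semi_linear A (induced_less \<phi> \<inter> A \<times> A)"
proof -
  define h where "h a = card {w \<in> \<phi> ` A. w \<le> \<phi> a}" for a
  have "finite (\<phi> ` A)"
    using assms by simp
  note position = rank_in_finite_set[OF this]
  have "h ` A = {1..card (\<phi> ` A)}"
    using position(1) by (simp add: h_def image_image)
  moreover have "\<forall>a\<in>A. \<forall>b\<in>A. (a, b) \<in> induced_less \<phi> \<inter> A \<times> A \<longleftrightarrow> h a < h b"
    using position(2) by (simp add: h_def)
  ultimately show ?thesis
    unfolding semi_linear_def by blast
qed

definition lex_double_order :: "'a set \<Rightarrow> ('a \<Rightarrow> real \<times> real) \<Rightarrow> 'a rel \<times> 'a rel" where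
  "lex_double_order A f =
     (induced_less (fst \<circ> f) \<inter> A \<times> A,
      {(a, b) \<in> A \<times> A. fst (f a) = fst (f b) \<and> snd (f a) < snd (f b)})"

lemma regular_lex_double_order:
  assumes "finite A" "inj_on f A"
  shows "regular_double_order A (lex_double_order A f)"
proof -
  have "fst (f a) < fst (f b) \<or> fst (f b) < fst (f a) \<or>
      fst (f a) = fst (f b) \<and> (snd (f a) < snd (f b) \<or> snd (f b) < snd (f a))"
    if "a \<in> A" "b \<in> A" "a \<noteq> b" for a b
    using assms(2) that by (smt (verit) inj_onD prod_eq_iff)
  then have "double_order A (lex_double_order A f)"
    by (auto simp: double_order_def strict_po_def lex_double_order_def trans_def)
  moreover have "semi_linear A (fst (lex_double_order A f))"
    using semi_linear_induced_less[OF assms(1)] by (simp add: lex_double_order_def)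
  ultimately show ?thesis
    by (auto simp: regular_double_order_def lex_double_order_def)
qed

lemma in_Uset_lex_double_order: "f \<in> A \<rightarrow>\<^sub>E UNIV \<Longrightarrow> f \<in> Uset A (lex_double_order A f)"
  by (simp add: Uset_def lex_double_order_def)

lemma Union_Uset_Rplus:
  assumes "finite A"
  shows "(\<Union>d\<in>Rplus A. Uset A d) = OConf A"
proof
  show "(\<Union>d\<in>Rplus A. Uset A d) \<subseteq> OConf A"
    using Uset_subset_OConf by (auto simp: Rplus_def semi_regular_def)
  show "OConf A \<subseteq> (\<Union>d\<in>Rplus A. Uset A d)"
  proof
    fix f assume "f \<in> OConf A"
    then have "f \<in> A \<rightarrow>\<^sub>E UNIV" "inj_on f A"
      by (simp_all add: OConf_def)
    then have "lex_double_order A f \<in> Rplus A" "f \<in> Uset A (lex_double_order A f)"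
      using semi_regular_if_regular[OF regular_lex_double_order[OF assms]] in_Uset_lex_double_order
      by (simp_all add: Rplus_def)
    then show "f \<in> (\<Union>d\<in>Rplus A. Uset A d)"
      by blast
  qed
qed

lemma openin_confspace_less:
  fixes c :: "real \<times> real \<Rightarrow> real"
  assumes "a \<in> A" "b \<in> A" "continuous_on UNIV c"
  shows "openin (confspace A) {f \<in> topspace (confspace A). c (f a) < c (f b)}"
proof -
  have "continuous_map euclidean euclideanreal c"
    using assms(3) by (simp add: continuous_map_iff_continuous2)
  then have "continuous_map (confspace A) euclideanreal (c \<circ> (\<lambda>f. f x))" if "x \<in> A" for x
    unfolding confspace_def using continuous_map_product_projection[OF that]
    by (rule continuous_map_compose[rotated])
  then have "continuous_map (confspace A) euclideanreal (\<lambda>f. c (f b) - c (f a))"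
    using assms(1,2) by (intro continuous_map_diff) (simp_all add: o_def)
  from openin_continuous_map_preimage[OF this, of "{0<..}"] show ?thesis
    by simp
qed

lemma openin_Uset:
  assumes "finite A" "fst d \<subseteq> A \<times> A" "snd d \<subseteq> A \<times> A"
  shows "openin (confspace A) (Uset A d)"
proof -
  let ?T = "confspace A"
  let ?U = "\<lambda>c (a, b). {f \<in> topspace ?T. c (f a) < c (f b)}"
  have INT_open: "openin ?T ((\<Inter>p\<in>r. ?U c p) \<inter> topspace ?T)"
    if "r \<subseteq> A \<times> A" "continuous_on UNIV c" for r and c :: "real \<times> real \<Rightarrow> real"
    using that assms(1) by (intro openin_INT finite_subset[OF that(1)]) (auto intro!: openin_confspace_less)
  have "continuous_on UNIV (fst :: real \<times> real \<Rightarrow> real)" "continuous_on UNIV (snd :: real \<times> real \<Rightarrow> real)"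
    by (intro continuous_intros)+
  note open_Int = openin_Int[OF INT_open[OF assms(2) this(1)] INT_open[OF assms(3) this(2)]]
  have "Uset A d = ((\<Inter>p\<in>fst d. ?U fst p) \<inter> topspace ?T) \<inter> ((\<Inter>p\<in>snd d. ?U snd p) \<inter> topspace ?T)"
    by (auto simp: Uset_def confspace_def)
  then show ?thesis
    using open_Int by (simp only:)
qed

lemma continuous_map_scaleR [continuous_intros]:
  fixes g :: "'a \<Rightarrow> 'b::real_normed_vector"
  shows "continuous_map X euclideanreal f \<Longrightarrow> continuous_map X euclidean g \<Longrightarrow>
    continuous_map X euclidean (\<lambda>x. f x *\<^sub>R g x)"
  by (simp add: continuous_map_atin tendsto_scaleR)

lemma contractible_space_product_convex:
  fixes C :: "('a \<Rightarrow> 'b::real_normed_vector) set"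
  assumes sub: "C \<subseteq> A \<rightarrow>\<^sub>E UNIV" and c: "c \<in> C"
    and convex: "\<And>f g t. f \<in> C \<Longrightarrow> g \<in> C \<Longrightarrow> 0 \<le> t \<Longrightarrow> t \<le> 1 \<Longrightarrow>
      (\<lambda>i. (1 - t) *\<^sub>R f i + t *\<^sub>R g i) \<in> C"
  shows "contractible_space (subtopology (product_topology (\<lambda>_. euclidean) A) C)"
proof -
  let ?X = "subtopology (product_topology (\<lambda>_. euclidean) A) C"
  let ?Y = "prod_topology (top_of_set {0..1}) ?X"
  define h where "h = (\<lambda>(t :: real, f) i. (1 - t) *\<^sub>R f i + t *\<^sub>R c i)"
  have topspace: "topspace ?Y = {0..1} \<times> C"
    using sub by auto
  have "continuous_map ?Y euclidean (\<lambda>p. h p k)" if "k \<in> A" for k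
  proof -
    have "continuous_map ?Y euclideanreal fst"
      by (intro continuous_map_into_fulltopology[OF continuous_map_fst])
    moreover have "continuous_map ?Y euclidean (\<lambda>p. snd p k)"
      using continuous_map_compose[OF continuous_map_snd
          continuous_map_from_subtopology[OF continuous_map_product_projection[OF that]]]
      by (simp add: o_def)
    ultimately show ?thesis
      unfolding h_def case_prod_beta by (intro continuous_intros) auto
  qed
  moreover have "h ` topspace ?Y \<subseteq> C"
    using c convex by (auto simp: topspace h_def)
  moreover have "C \<subseteq> extensional A"
    using sub by (auto simp: PiE_def)
  ultimately have "continuous_map ?Y ?X h"
    by (auto simp: continuous_map_in_subtopology continuous_map_componentwise)
  moreover have "h (0, f) = f" "h (1, f) = c" for f
    by (simp_all add: h_def)
  ultimately have "homotopic_with (\<lambda>_. True) ?X ?X id (\<lambda>_. c)"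
    unfolding homotopic_with_def by (intro exI[of _ h]) auto
  then show ?thesis
    unfolding contractible_space_def by blast
qed

lemma convex_combination_less:
  fixes x y x' y' t :: real
  assumes "x < x'" "y < y'" "0 \<le> t" "t \<le> 1"
  shows "(1 - t) * x + t * y < (1 - t) * x' + t * y'"
proof (cases "t = 1")
  case False
  then have "(1 - t) * x < (1 - t) * x'" "t * y \<le> t * y'"
    using assms by (simp_all add: mult_left_mono)
  then show ?thesis
    by linarith
qed (use assms in simp)

lemma Uset_convex:
  assumes "f \<in> Uset A d" "g \<in> Uset A d" "0 \<le> t" "t \<le> 1"
  shows "(\<lambda>i. (1 - t) *\<^sub>R f i + t *\<^sub>R g i) \<in> Uset A d"
proof -
  \<comment> \<open>Outside \<open>A\<close> both configurations are \<open>undefined\<close>, hence so is their combination\<close>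
  have "(1 - t) *\<^sub>R u + t *\<^sub>R u = u" for u :: "real \<times> real"
    by (simp add: scaleR_left_distrib[symmetric])
  moreover have "(1 - t) * p (f a) + t * p (g a) < (1 - t) * p (f b) + t * p (g b)"
    if "p = fst \<and> (a, b) \<in> fst d \<or> p = snd \<and> (a, b) \<in> snd d" for p a b
    using assms that by (intro convex_combination_less) (auto simp: Uset_def)
  ultimately show ?thesis
    using assms(1,2) by (auto simp: Uset_def PiE_def extensional_def)
qed

lemma contractible_space_Uset:
  assumes "Uset A d \<noteq> {}"
  shows "contractible_space (subtopology (confspace A) (Uset A d))"
proof -
  obtain c where c: "c \<in> Uset A d"
    using assms by blast
  have "Uset A d \<subseteq> A \<rightarrow>\<^sub>E UNIV"
    by (auto simp: Uset_def)
  then show ?thesis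
    unfolding confspace_def by (rule contractible_space_product_convex[OF _ c]) (rule Uset_convex)
qed

lemma finite_Rplus:
  assumes "finite A"
  shows "finite (Rplus A)"
proof (rule finite_subset)
  show "Rplus A \<subseteq> Pow (A \<times> A) \<times> Pow (A \<times> A)"
    by (auto simp: Rplus_def semi_regular_def double_order_def strict_po_def)
  show "finite (Pow (A \<times> A) \<times> Pow (A \<times> A))"
    using assms by simp
qed

lemma Inter_Uset_eq_Uset_double_join:
  assumes "finite A" "J \<subseteq> Rplus A" "J \<noteq> {}" "(\<Inter>d\<in>J. Uset A d) \<noteq> {}"
  shows "double_join J \<in> Rplus A" "Uset A (double_join J) = (\<Inter>d\<in>J. Uset A d)"
proof -
  show eq: "Uset A (double_join J) = (\<Inter>d\<in>J. Uset A d)"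
    using assms(3) by (rule Uset_double_join)
  have "finite J"
    using finite_Rplus[OF assms(1)] assms(2) by (rule finite_subset[rotated])
  moreover have "semi_regular A d" if "d \<in> J" for d
    using assms(2) that by (auto simp: Rplus_def)
  ultimately have "semi_regular A (double_join J)"
    using assms(3,4) eq by (intro semi_regular_double_join) simp_all
  then show "double_join J \<in> Rplus A"
    by (simp add: Rplus_def)
qed

lemma openin_OConf_Uset:
  assumes "finite A" "d \<in> Rplus A"
  shows "openin (subtopology (confspace A) (OConf A)) (Uset A d)"
proof -
  have d: "double_order A d"
    using assms(2) by (simp add: Rplus_def semi_regular_def)
  then have "openin (confspace A) (Uset A d)"
    using assms(1) by (intro openin_Uset) (simp_all add: double_order_def strict_po_def)
  then show ?thesis
    using Uset_subset_OConf[OF d] openin_subtopology_Int[of _ _ "OConf A"] by (metis inf.absorb1)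
qed

theorem proposition5p6:
  fixes A :: "'a set"
  assumes "finite A"
  shows
    \<comment> \<open>open cover of OConf(A,R^2)\<close>
    "(\<Union>d\<in>Rplus A. Uset A d) = OConf A
     \<and> (\<forall>d\<in>Rplus A. openin (subtopology (confspace A) (OConf A)) (Uset A d))
     \<comment> \<open>Sigma_A-equivariant\<close>
     \<and> (\<forall>\<sigma> d. \<sigma> permutes A \<and> d \<in> Rplus A \<longrightarrow>
          dact d \<sigma> \<in> Rplus A \<and> (\<lambda>f. cact f \<sigma>) ` Uset A d = Uset A (dact d \<sigma>))
     \<comment> \<open>proper\<close>
     \<and> (\<forall>\<sigma> d. \<sigma> permutes A \<and> \<sigma> \<noteq> id \<and> d \<in> Rplus A \<longrightarrow>
          Uset A d \<inter> Uset A (dact d \<sigma>) = {})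
     \<comment> \<open>good\<close>
     \<and> (\<forall>J. J \<subseteq> Rplus A \<and> J \<noteq> {} \<and> (\<Inter>d\<in>J. Uset A d) \<noteq> {} \<longrightarrow>
          contractible_space (subtopology (confspace A) (\<Inter>d\<in>J. Uset A d)))
     \<comment> \<open>complete\<close>
     \<and> (\<forall>J. J \<subseteq> Rplus A \<and> J \<noteq> {} \<and> (\<Inter>d\<in>J. Uset A d) \<noteq> {} \<longrightarrow>
          (\<exists>e\<in>Rplus A. Uset A e = (\<Inter>d\<in>J. Uset A d)))"
proof (intro conjI allI ballI impI)
  show "(\<Union>d\<in>Rplus A. Uset A d) = OConf A"
    using assms by (rule Union_Uset_Rplus)
  show "openin (subtopology (confspace A) (OConf A)) (Uset A d)" if "d \<in> Rplus A" for d
    using assms that by (rule openin_OConf_Uset)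
  show "dact d \<sigma> \<in> Rplus A" "(\<lambda>f. cact f \<sigma>) ` Uset A d = Uset A (dact d \<sigma>)"
    if "\<sigma> permutes A \<and> d \<in> Rplus A" for \<sigma> d
    using that semi_regular_dact[of A d \<sigma>] Uset_dact[of \<sigma> A d] by (simp_all add: Rplus_def)
  show "Uset A d \<inter> Uset A (dact d \<sigma>) = {}" if "\<sigma> permutes A \<and> \<sigma> \<noteq> id \<and> d \<in> Rplus A" for \<sigma> d
    using that Uset_Int_Uset_dact[OF assms, of d \<sigma>] by (simp add: Rplus_def)
  show "contractible_space (subtopology (confspace A) (\<Inter>d\<in>J. Uset A d))"
    and "\<exists>e\<in>Rplus A. Uset A e = (\<Inter>d\<in>J. Uset A d)"
    if "J \<subseteq> Rplus A \<and> J \<noteq> {} \<and> (\<Inter>d\<in>J. Uset A d) \<noteq> {}" for J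
    using that Inter_Uset_eq_Uset_double_join[OF assms] contractible_space_Uset by metis+
qed

end
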